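(* Let $\kappa$ be a regular uncountable cardinal, $I$ an ideal on $\kappa$, and $L=\{\lambda+1:\lambda<\kappa \text{ a limit ordinal}\}$. Then $I$ is normal if and only if $I$ is pleasant and $L\in I$.
   Context: An ideal on $\kappa$ is a family of subsets of $\kappa$ closed under subsets and finite unions, which is $<\kappa$-complete and contains all singletons. For $A\subseteq\kappa$ and $X_\alpha\subseteq\kappa$, $\bigtriangledown_{\alpha\in A}X_\alpha=\{\xi<\kappa:\exists\alpha<\xi\,(\alpha\in A\wedge \xi\in X_\alpha)\}$. $I$ is normal if $X_\alpha\in I$ for all $\alpha<\kappa$ implies $\bigtriangledown_{\alpha<\kappa}X_\alpha\in I$. $I$ is pleasant if whenever $A\in I$ and $X_\alpha\in I$ for all $\alpha$, then $\bigtriangledown_{\alpha\in A}X_\alpha\in I$. *)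

theory Defs
  imports Main "HOL-Library.Countable_Set"
begin

text \<open>The cardinal kappa is represented by a cardinal well-order r (Card_order r);
  the ordinals below kappa are the elements of Field r, ordered by r.\<close>

definition strict_lt :: "'a rel \<Rightarrow> 'a \<Rightarrow> 'a \<Rightarrow> bool" where
  "strict_lt r a b \<longleftrightarrow> (a, b) \<in> r \<and> a \<noteq> b"

definition is_succ :: "'a rel \<Rightarrow> 'a \<Rightarrow> 'a \<Rightarrow> bool" where
  "is_succ r a b \<longleftrightarrow> strict_lt r a b \<and> (\<forall>c. strict_lt r a c \<longrightarrow> (b, c) \<in> r)"

definition is_limit :: "'a rel \<Rightarrow> 'a \<Rightarrow> bool" where
  "is_limit r l \<longleftrightarrow> l \<in> Field r \<and> (\<exists>a. strict_lt r a l) \<and> \<not> (\<exists>a. is_succ r a l)"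

definition succ_of_limits :: "'a rel \<Rightarrow> 'a set" where
  "succ_of_limits r = {b. \<exists>l. is_limit r l \<and> is_succ r l b}"

definition is_ideal :: "'a rel \<Rightarrow> 'a set set \<Rightarrow> bool" where
  "is_ideal r I \<longleftrightarrow>
     I \<subseteq> Pow (Field r) \<and>
     (\<forall>X Y. X \<in> I \<and> Y \<subseteq> X \<longrightarrow> Y \<in> I) \<and>
     (\<forall>X Y. X \<in> I \<and> Y \<in> I \<longrightarrow> X \<union> Y \<in> I) \<and>
     (\<forall>F. F \<subseteq> I \<and> (card_of F, r) \<in> ordLess \<longrightarrow> \<Union>F \<in> I) \<and>
     (\<forall>a \<in> Field r. {a} \<in> I)"

definition diag_union :: "'a rel \<Rightarrow> 'a set \<Rightarrow> ('a \<Rightarrow> 'a set) \<Rightarrow> 'a set" where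
  "diag_union r A X = {\<xi> \<in> Field r. \<exists>\<alpha>. strict_lt r \<alpha> \<xi> \<and> \<alpha> \<in> A \<and> \<xi> \<in> X \<alpha>}"

definition normal_ideal :: "'a rel \<Rightarrow> 'a set set \<Rightarrow> bool" where
  "normal_ideal r I \<longleftrightarrow>
     (\<forall>X. (\<forall>\<alpha> \<in> Field r. X \<alpha> \<in> I) \<longrightarrow> diag_union r (Field r) X \<in> I)"

definition pleasant_ideal :: "'a rel \<Rightarrow> 'a set set \<Rightarrow> bool" where
  "pleasant_ideal r I \<longleftrightarrow>
     (\<forall>A X. A \<in> I \<and> (\<forall>\<alpha> \<in> Field r. X \<alpha> \<in> I) \<longrightarrow> diag_union r A X \<in> I)"

end

(* Normality gives pleasantness at once, and L is the diagonal union of the sets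
   {\<lambda> + 1} for limits \<lambda>, each of which has at most one element.

   Conversely, cut \<kappa> into blocks starting at 0 or at \<lambda> + 1 for a limit \<lambda>;
   the set B of block starts is {0} \<union> L \<in> I. If \<xi> \<in> X \<alpha> with \<alpha> < \<xi>, the start \<gamma>
   of the block of \<alpha> (the least \<gamma> with no limit in [\<gamma>, \<alpha>]) is at most \<xi>, and
   \<xi> \<in> Y \<gamma>, the union of the X \<alpha> over all \<alpha> below the first limit above \<gamma>.
   Limits are unbounded in an uncountable \<kappa>, so each Y \<gamma> is a union of fewer than
   \<kappa> members of I. Hence the diagonal union of X lies inside
   B \<union> (diagonal union of Y over B), which is in I by pleasantness. *)

theory Submission
  imports Defs "HOL-Library.Countable_Set_Type"
begin

unbundle cardinal_syntax

definition no_limit_between :: "'a rel \<Rightarrow> 'a \<Rightarrow> 'a \<Rightarrow> bool" where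
  "no_limit_between r \<gamma> \<alpha> \<longleftrightarrow> \<not> (\<exists>l. is_limit r l \<and> (\<gamma>, l) \<in> r \<and> (l, \<alpha>) \<in> r)"

lemma strict_lt_Field: "strict_lt r a b \<Longrightarrow> a \<in> Field r \<and> b \<in> Field r"
  unfolding strict_lt_def by (auto intro: FieldI1 FieldI2)

lemma is_limit_Field: "is_limit r l \<Longrightarrow> l \<in> Field r"
  by (simp add: is_limit_def)

context wo_rel
begin

lemma not_strict_lt_iff:
  assumes "a \<in> Field r" "b \<in> Field r"
  shows "\<not> strict_lt r a b \<longleftrightarrow> (b, a) \<in> r"
  using assms TOTALS ANTISYM REFL unfolding strict_lt_def antisym_def refl_on_def by blast

lemma strict_lt_asym: "strict_lt r a b \<Longrightarrow> (b, a) \<notin> r"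
  using ANTISYM unfolding strict_lt_def antisym_def by blast

lemma is_succ_eq_suc: "is_succ r a b \<Longrightarrow> b = suc {a}"
  by (rule equals_suc_AboveS) (auto simp: is_succ_def strict_lt_def AboveS_def intro: FieldI1 FieldI2)

lemma iterate_suc_if_no_limit_between:
  assumes "(\<gamma>, \<eta>) \<in> r" "no_limit_between r \<gamma> \<eta>"
  shows "\<eta> \<in> range (\<lambda>n. ((\<lambda>x. suc {x}) ^^ n) \<gamma>)"
  using assms
proof (induction \<eta> rule: wf_induct_rule[OF WF])
  case (1 \<eta>)
  show ?case
  proof (cases "\<eta> = \<gamma>")
    case True
    then show ?thesis by (metis funpow_0 rangeI)
  next
    case False
    then have "strict_lt r \<gamma> \<eta>" using "1.prems"(1) by (simp add: strict_lt_def)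
    have "\<not> is_limit r \<eta>"
      using "1.prems" REFL strict_lt_Field[OF \<open>strict_lt r \<gamma> \<eta>\<close>]
      unfolding no_limit_between_def refl_on_def by blast
    then obtain \<delta> where \<delta>: "is_succ r \<delta> \<eta>"
      using \<open>strict_lt r \<gamma> \<eta>\<close> strict_lt_Field[OF \<open>strict_lt r \<gamma> \<eta>\<close>]
      unfolding is_limit_def by blast
    then have "strict_lt r \<delta> \<eta>" by (simp add: is_succ_def)
    have "(\<gamma>, \<delta>) \<in> r"
    proof (rule ccontr)
      assume "(\<gamma>, \<delta>) \<notin> r"
      then have "strict_lt r \<delta> \<gamma>"
        using not_strict_lt_iff[of \<delta> \<gamma>] strict_lt_Field[OF \<open>strict_lt r \<gamma> \<eta>\<close>]
          strict_lt_Field[OF \<open>strict_lt r \<delta> \<eta>\<close>] by blast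
      then show False using \<delta> \<open>strict_lt r \<gamma> \<eta>\<close> strict_lt_asym unfolding is_succ_def by blast
    qed
    moreover have "no_limit_between r \<gamma> \<delta>"
      using "1.prems"(2) \<open>strict_lt r \<delta> \<eta>\<close> TRANS
      unfolding no_limit_between_def strict_lt_def trans_def by blast
    moreover have "(\<delta>, \<eta>) \<in> r - Id" using \<open>strict_lt r \<delta> \<eta>\<close> by (auto simp: strict_lt_def)
    ultimately obtain n where "\<delta> = ((\<lambda>x. suc {x}) ^^ n) \<gamma>" using "1.IH" by blast
    then have "\<eta> = ((\<lambda>x. suc {x}) ^^ Suc n) \<gamma>" using is_succ_eq_suc[OF \<delta>] by simp
    then show ?thesis by blast
  qed
qed

lemma no_limit_between_if_strict_lt:
  assumes "strict_lt r \<alpha> \<xi>"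
  shows "no_limit_between r \<xi> \<alpha>"
  unfolding no_limit_between_def
proof
  assume "\<exists>l. is_limit r l \<and> (\<xi>, l) \<in> r \<and> (l, \<alpha>) \<in> r"
  then have "(\<xi>, \<alpha>) \<in> r" using TRANS unfolding trans_def by blast
  then show False using strict_lt_asym[OF assms] by blast
qed

lemma no_limit_between_subset_underS:
  assumes "is_limit r l" "(\<gamma>, l) \<in> r"
  shows "{\<alpha> \<in> Field r. no_limit_between r \<gamma> \<alpha>} \<subseteq> underS l"
proof
  fix \<alpha> assume \<alpha>: "\<alpha> \<in> {\<alpha> \<in> Field r. no_limit_between r \<gamma> \<alpha>}"
  then have "(l, \<alpha>) \<notin> r" using assms unfolding no_limit_between_def by blast
  then have "strict_lt r \<alpha> l" using \<alpha> not_strict_lt_iff[of \<alpha> l] is_limit_Field[OF assms(1)] by blast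
  then show "\<alpha> \<in> underS l" by (simp add: strict_lt_def underS_def)
qed

lemma least_no_limit_between_cases:
  assumes \<alpha>: "\<alpha> \<in> Field r" and \<gamma>: "\<gamma> \<in> Field r" "no_limit_between r \<gamma> \<alpha>"
    and least: "\<And>c. c \<in> Field r \<Longrightarrow> no_limit_between r c \<alpha> \<Longrightarrow> (\<gamma>, c) \<in> r"
  shows "\<gamma> = minim (Field r) \<or> \<gamma> \<in> succ_of_limits r"
proof (cases "\<exists>a. strict_lt r a \<gamma>")
  case False
  then have "\<gamma> = minim (Field r)"
    using \<gamma>(1) not_strict_lt_iff by (intro equals_minim) auto
  then show ?thesis ..
next
  case True
  consider (succ) \<delta> where "is_succ r \<delta> \<gamma>" | (limit) "is_limit r \<gamma>"
    using True \<gamma>(1) unfolding is_limit_def by blast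
  then show ?thesis
  proof cases
    case succ
    then have "strict_lt r \<delta> \<gamma>" by (simp add: is_succ_def)
    then have "\<not> no_limit_between r \<delta> \<alpha>"
      using least[of \<delta>] strict_lt_asym[OF \<open>strict_lt r \<delta> \<gamma>\<close>]
        strict_lt_Field[OF \<open>strict_lt r \<delta> \<gamma>\<close>] by blast
    then obtain l where l: "is_limit r l" "(\<delta>, l) \<in> r" "(l, \<alpha>) \<in> r"
      unfolding no_limit_between_def by blast
    have "(\<gamma>, l) \<notin> r" using \<gamma>(2) l unfolding no_limit_between_def by blast
    then have "l = \<delta>" using succ l(2) unfolding is_succ_def strict_lt_def by blast
    then show ?thesis using succ l(1) unfolding succ_of_limits_def by blast
  next
    case limit
    have "(\<gamma>, \<alpha>) \<notin> r"
      using \<gamma> limit REFL unfolding no_limit_between_def refl_on_def by blast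
    then have "strict_lt r \<alpha> \<gamma>" using not_strict_lt_iff[OF \<alpha> \<gamma>(1)] by blast
    moreover have "(\<gamma>, c) \<in> r" if "strict_lt r \<alpha> c" for c
      using least[of c] no_limit_between_if_strict_lt[OF that] strict_lt_Field[OF that] by blast
    ultimately have "is_succ r \<alpha> \<gamma>" unfolding is_succ_def by blast
    then show ?thesis using limit unfolding is_limit_def by blast
  qed
qed

lemma diag_union_subset_block_starts:
  defines "B \<equiv> insert (minim (Field r)) (succ_of_limits r)"
  shows "diag_union r (Field r) X \<subseteq>
    diag_union r B (\<lambda>\<gamma>. \<Union> (X ` {\<alpha> \<in> Field r. no_limit_between r \<gamma> \<alpha>})) \<union> B"
    (is "_ \<subseteq> diag_union r B ?Y \<union> B")
proof
  fix \<xi> assume "\<xi> \<in> diag_union r (Field r) X"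
  then obtain \<alpha> where \<xi>: "\<xi> \<in> Field r" "strict_lt r \<alpha> \<xi>" "\<xi> \<in> X \<alpha>" and \<alpha>: "\<alpha> \<in> Field r"
    unfolding diag_union_def by blast
  let ?T = "{\<gamma> \<in> Field r. no_limit_between r \<gamma> \<alpha>}"
  define \<gamma> where "\<gamma> = minim ?T"
  have "\<xi> \<in> ?T" using \<xi> no_limit_between_if_strict_lt by blast
  have least: "\<And>c. c \<in> ?T \<Longrightarrow> (\<gamma>, c) \<in> r"
    unfolding \<gamma>_def by (rule minim_least) auto
  have "\<gamma> \<in> ?T" unfolding \<gamma>_def using \<open>\<xi> \<in> ?T\<close> by (intro minim_in) auto
  have "(\<gamma>, \<xi>) \<in> r" using least \<open>\<xi> \<in> ?T\<close> .
  have "\<gamma> \<in> B"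
    using least_no_limit_between_cases[OF \<alpha>, of \<gamma>] \<open>\<gamma> \<in> ?T\<close> least unfolding B_def by blast
  have "\<xi> \<in> ?Y \<gamma>" using \<open>\<gamma> \<in> ?T\<close> \<alpha> \<xi>(3) by blast
  show "\<xi> \<in> diag_union r B ?Y \<union> B"
  proof (cases "\<gamma> = \<xi>")
    case True
    then show ?thesis using \<open>\<gamma> \<in> B\<close> by blast
  next
    case False
    then have "strict_lt r \<gamma> \<xi>" using \<open>(\<gamma>, \<xi>) \<in> r\<close> by (simp add: strict_lt_def)
    then show ?thesis using \<xi>(1) \<open>\<gamma> \<in> B\<close> \<open>\<xi> \<in> ?Y \<gamma>\<close> unfolding diag_union_def by blast
  qed
qed

end

lemma countable_ordLess_Card_order:
  assumes r: "Card_order r" and unc: "\<not> countable (Field r)" and A: "countable A"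
  shows "|A| <o r"
proof -
  have "\<not> |Field r| \<le>o |A|" using countable_ordLeq[OF _ A] unc by blast
  then have "|A| <o |Field r|"
    using not_ordLeq_iff_ordLess[OF card_of_Well_order card_of_Well_order] by blast
  then show ?thesis using card_of_Field_ordIso[OF r] by (rule ordLess_ordIso_trans)
qed

lemma card_of_subset_underS:
  assumes "Card_order r" "a \<in> Field r" "A \<subseteq> underS r a"
  shows "|A| <o r"
  using card_of_mono1[OF assms(3)] card_of_underS[OF assms(1,2)] by (rule ordLeq_ordLess_trans)

lemma exists_limit_above:
  assumes r: "Card_order r" and unc: "\<not> countable (Field r)" and \<gamma>: "\<gamma> \<in> Field r"
  shows "\<exists>l. is_limit r l \<and> (\<gamma>, l) \<in> r"
proof (rule ccontr)
  assume no_limit: "\<not> (\<exists>l. is_limit r l \<and> (\<gamma>, l) \<in> r)"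
  interpret wo_rel r using r card_order_on_well_order_on wo_rel_def by blast
  let ?S = "range (\<lambda>n. ((\<lambda>x. suc {x}) ^^ n) \<gamma>)"
  have "Field r \<subseteq> underS \<gamma> \<union> ?S"
  proof
    fix \<eta> assume \<eta>: "\<eta> \<in> Field r"
    show "\<eta> \<in> underS \<gamma> \<union> ?S"
    proof (cases "(\<gamma>, \<eta>) \<in> r")
      case True
      moreover have "no_limit_between r \<gamma> \<eta>" using no_limit by (auto simp: no_limit_between_def)
      ultimately show ?thesis using iterate_suc_if_no_limit_between by blast
    next
      case False
      then show ?thesis using not_strict_lt_iff[OF \<eta> \<gamma>] by (simp add: strict_lt_def underS_def)
    qed
  qed
  moreover have "|underS \<gamma> \<union> ?S| <o r"
  proof (rule card_of_Un_ordLess_infinite_Field[OF _ r])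
    show "\<not> finite (Field r)" using unc countable_finite by blast
    show "|underS \<gamma>| <o r" using card_of_underS[OF r \<gamma>] .
    show "|?S| <o r" by (rule countable_ordLess_Card_order[OF r unc]) simp
  qed
  ultimately have "|Field r| <o r" by (rule ordLeq_ordLess_trans[OF card_of_mono1])
  then show False using not_ordLess_ordIso card_of_Field_ordIso[OF r] by blast
qed

lemma ideal_mono: "is_ideal r I \<Longrightarrow> X \<in> I \<Longrightarrow> Y \<subseteq> X \<Longrightarrow> Y \<in> I"
  unfolding is_ideal_def by metis

lemma ideal_Un: "is_ideal r I \<Longrightarrow> X \<in> I \<Longrightarrow> Y \<in> I \<Longrightarrow> X \<union> Y \<in> I"
  unfolding is_ideal_def by metis

lemma ideal_singleton: "is_ideal r I \<Longrightarrow> a \<in> Field r \<Longrightarrow> {a} \<in> I"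
  unfolding is_ideal_def by metis

lemma ideal_UN_small:
  assumes "is_ideal r I" "|S| <o r" "\<And>a. a \<in> S \<Longrightarrow> X a \<in> I"
  shows "\<Union> (X ` S) \<in> I"
proof -
  have "|X ` S| <o r" using card_of_image assms(2) by (rule ordLeq_ordLess_trans)
  moreover have "X ` S \<subseteq> I" using assms(3) by blast
  ultimately show ?thesis using assms(1) unfolding is_ideal_def by metis
qed

lemma diag_union_subset_diag_union_Field: "diag_union r A X \<subseteq> diag_union r (Field r) X"
  by (auto simp: diag_union_def dest: strict_lt_Field)

lemma pleasant_if_normal:
  assumes "is_ideal r I" "normal_ideal r I"
  shows "pleasant_ideal r I"
  unfolding pleasant_ideal_def
proof (intro allI impI)
  fix A X assume "A \<in> I \<and> (\<forall>\<alpha>\<in>Field r. X \<alpha> \<in> I)"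
  then have "diag_union r (Field r) X \<in> I" using assms(2) unfolding normal_ideal_def by simp
  then show "diag_union r A X \<in> I"
    using diag_union_subset_diag_union_Field by (rule ideal_mono[OF assms(1)])
qed

lemma succ_of_limits_in_if_normal:
  assumes "Well_order r" and I: "is_ideal r I" and normal: "normal_ideal r I"
  shows "succ_of_limits r \<in> I"
proof -
  interpret wo_rel r using assms(1) wo_rel_def by blast
  define X where "X \<alpha> = {b. is_limit r \<alpha> \<and> is_succ r \<alpha> b}" for \<alpha>
  have "X \<alpha> \<in> I" if \<alpha>: "\<alpha> \<in> Field r" for \<alpha>
  proof (cases "\<exists>b. is_succ r \<alpha> b")
    case True
    then obtain b where b: "is_succ r \<alpha> b" ..
    have "X \<alpha> \<subseteq> {b}" using is_succ_eq_suc[OF b] by (auto simp: X_def dest: is_succ_eq_suc)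
    moreover have "b \<in> Field r" using b by (auto simp: is_succ_def dest: strict_lt_Field)
    ultimately show ?thesis by (intro ideal_mono[OF I ideal_singleton[OF I]])
  next
    case False
    then have "X \<alpha> \<subseteq> {\<alpha>}" by (simp add: X_def)
    then show ?thesis by (intro ideal_mono[OF I ideal_singleton[OF I \<alpha>]])
  qed
  then have "diag_union r (Field r) X \<in> I" using normal by (simp add: normal_ideal_def)
  moreover have "succ_of_limits r \<subseteq> diag_union r (Field r) X"
    by (auto simp: succ_of_limits_def diag_union_def X_def is_succ_def dest: strict_lt_Field)
  ultimately show ?thesis by (rule ideal_mono[OF I])
qed

lemma normal_if_pleasant:
  assumes r: "Card_order r" and unc: "\<not> countable (Field r)" and I: "is_ideal r I"
    and pleasant: "pleasant_ideal r I" and L: "succ_of_limits r \<in> I"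
  shows "normal_ideal r I"
  unfolding normal_ideal_def
proof (intro allI impI)
  fix X assume X: "\<forall>\<alpha>\<in>Field r. X \<alpha> \<in> I"
  interpret wo_rel r using r card_order_on_well_order_on wo_rel_def by blast
  define Y where "Y \<gamma> = \<Union> (X ` {\<alpha> \<in> Field r. no_limit_between r \<gamma> \<alpha>})" for \<gamma>
  define B where "B = insert (minim (Field r)) (succ_of_limits r)"
  have Y: "Y \<gamma> \<in> I" if \<gamma>: "\<gamma> \<in> Field r" for \<gamma>
  proof -
    obtain l where l: "is_limit r l" "(\<gamma>, l) \<in> r" using exists_limit_above[OF r unc \<gamma>] by blast
    have "|{\<alpha> \<in> Field r. no_limit_between r \<gamma> \<alpha>}| <o r"
      by (rule card_of_subset_underS[OF r is_limit_Field[OF l(1)] no_limit_between_subset_underS[OF l]])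
    then show ?thesis unfolding Y_def by (rule ideal_UN_small[OF I]) (use X in auto)
  qed
  have B: "B \<in> I"
  proof -
    have "Field r \<noteq> {}" using unc by force
    then have "{minim (Field r)} \<in> I" by (intro ideal_singleton[OF I] minim_inField) auto
    from ideal_Un[OF I this L] show ?thesis by (simp add: B_def)
  qed
  have "diag_union r B Y \<in> I"
    by (intro pleasant[unfolded pleasant_ideal_def, rule_format] conjI ballI B Y)
  then have "diag_union r B Y \<union> B \<in> I" using B by (rule ideal_Un[OF I])
  then show "diag_union r (Field r) X \<in> I"
    by (rule ideal_mono[OF I]) (unfold Y_def[abs_def] B_def, rule diag_union_subset_block_starts)
qed

theorem corollary3p8:
  fixes r :: "'a rel" and I :: "'a set set"
  assumes "Card_order r" and "regularCard r" and "\<not> countable (Field r)"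
    and "is_ideal r I"
  shows "normal_ideal r I \<longleftrightarrow> pleasant_ideal r I \<and> succ_of_limits r \<in> I"
proof
  assume "normal_ideal r I"
  moreover have "Well_order r" using assms(1) card_order_on_well_order_on by blast
  ultimately show "pleasant_ideal r I \<and> succ_of_limits r \<in> I"
    using pleasant_if_normal[OF assms(4)] succ_of_limits_in_if_normal[OF _ assms(4)] by blast
next
  assume "pleasant_ideal r I \<and> succ_of_limits r \<in> I"
  then show "normal_ideal r I" using normal_if_pleasant[OF assms(1,3,4)] by blast
qed

end
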